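(* Let $S\subset\mathbb R^2$ be a finite set of $n>4$ points, none of which lies at the center of SED$(S)$. If $S$ is Pre-regular, then every internal angle of the convex hull of $S$ is strictly greater than $\pi(n-3)/n$.
   Context: SED$(S)$ is the smallest closed disk containing $S$. $S$ is \emph{Pre-regular} if there is a regular $n$-gon $P$ (the supporting polygon) such that for every pair of adjacent edges of $P$, one of the two edges contains exactly two points of $S$ (possibly at its endpoints) and the relative interior of the other edge contains no point of $S$. *)

theory Defs
  imports "HOL-Analysis.Analysis"
begin

text \<open>The plane R^2 is modelled by the type complex (a real inner product space).\<close>

definition is_SED :: "complex set \<Rightarrow> complex \<Rightarrow> real \<Rightarrow> bool" where
  "is_SED S c r \<longleftrightarrow> S \<subseteq> cball c r \<and> (\<forall>c' r'. S \<subseteq> cball c' r' \<longrightarrow> r \<le> r')"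

definition reg_vertex :: "complex \<Rightarrow> real \<Rightarrow> real \<Rightarrow> nat \<Rightarrow> nat \<Rightarrow> complex" where
  "reg_vertex c rho theta n k = c + complex_of_real rho * cis (theta + 2 * pi * real k / real n)"

definition reg_edge :: "complex \<Rightarrow> real \<Rightarrow> real \<Rightarrow> nat \<Rightarrow> nat \<Rightarrow> complex set" where
  "reg_edge c rho theta n k =
     closed_segment (reg_vertex c rho theta n k) (reg_vertex c rho theta n ((k + 1) mod n))"

definition reg_edge_relint :: "complex \<Rightarrow> real \<Rightarrow> real \<Rightarrow> nat \<Rightarrow> nat \<Rightarrow> complex set" where
  "reg_edge_relint c rho theta n k =
     open_segment (reg_vertex c rho theta n k) (reg_vertex c rho theta n ((k + 1) mod n))"

definition pre_regular :: "complex set \<Rightarrow> bool" where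
  "pre_regular S \<longleftrightarrow> (let n = card S in
     \<exists>c rho theta. rho > 0 \<and>
       (\<forall>k<n. let k' = (k + 1) mod n in
          (card (S \<inter> reg_edge c rho theta n k) = 2 \<and> S \<inter> reg_edge_relint c rho theta n k' = {}) \<or>
          (card (S \<inter> reg_edge c rho theta n k') = 2 \<and> S \<inter> reg_edge_relint c rho theta n k = {})))"

definition vec_angle :: "complex \<Rightarrow> complex \<Rightarrow> real" where
  "vec_angle x y = arccos ((x \<bullet> y) / (norm x * norm y))"

definition hull_internal_angle :: "complex set \<Rightarrow> complex \<Rightarrow> real \<Rightarrow> bool" where
  "hull_internal_angle S v alpha \<longleftrightarrow>
     (\<exists>u w. v extreme_point_of (convex hull S) \<and> u \<noteq> v \<and> w \<noteq> v \<and> u \<noteq> w \<and>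
        closed_segment v u face_of (convex hull S) \<and>
        closed_segment v w face_of (convex hull S) \<and>
        alpha = vec_angle (u - v) (w - v))"

end

theory Submission
  imports Defs
begin

text \<open>
  Lemma 5.10. Let S be a set of n > 4 points in the plane that is pre-regular with
  supporting regular n-gon P. Then every internal angle of the convex hull of S exceeds
  beta = pi (n - 3) / n.

  The n half-open edges of P (edge j without its first vertex) are pairwise disjoint,
  which is shown with the support functions of the edges. Pre-regularity forces non-full
  edges (those not containing exactly two points of S) to be isolated, and counting shows
  that the half-open edges carry at least n points; hence S lies on the boundary of P.
  Each point v of S then sees two further points x, y of S under an angle larger than beta:
  x lies on an edge through v and y on the edge one or two steps further along P, according
  to which edges are full. Finally, at a vertex v of the convex hull the internal angle
  bounds every angle xvy with x, y in S, since S lies in the wedge spanned by the two hull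
  edges at v.
\<close>

lemma vec_angle_sym: "vec_angle a b = vec_angle b a"
  unfolding vec_angle_def by (simp add: inner_commute mult.commute)

text \<open>For nonzero vectors the angle is the absolute value of the argument of their quotient;
  this turns all angle estimates into statements about Arg.\<close>

lemma vec_angle_eq_abs_Arg:
  assumes a: "a \<noteq> 0" and b: "b \<noteq> 0"
  shows "vec_angle a b = \<bar>Arg (b / a)\<bar>"
proof -
  define q where "q = b / a"
  have q0: "q \<noteq> 0" using a b by (simp add: q_def)
  have "a \<bullet> b = Re (cnj a * b)" by (simp add: inner_complex_def)
  also have "cnj a * b = (cnj a * a) * q" using a by (simp add: q_def)
  also have "cnj a * a = of_real ((cmod a)\<^sup>2)" using complex_norm_square[of a] by (simp add: mult.commute)
  finally have "a \<bullet> b = (cmod a)\<^sup>2 * Re q" by simp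
  moreover have "cmod b = cmod a * cmod q" using a by (simp add: q_def norm_divide)
  ultimately have "(a \<bullet> b) / (cmod a * cmod b) = Re q / cmod q"
    using a by (simp add: power2_eq_square field_simps)
  also have "Re q = cmod q * cos (Arg q)"
    by (metis Re_rcis rcis_cmod_Arg)
  finally have "(a \<bullet> b) / (cmod a * cmod b) = cos (Arg q)" using q0 by simp
  moreover have "\<bar>Arg q\<bar> \<le> pi" using mpi_less_Arg[of q] Arg_le_pi[of q] by linarith
  ultimately show ?thesis by (simp add: vec_angle_def arccos_cos_eq_abs q_def)
qed

lemma Arg_gt_of_Im:
  assumes "0 < \<beta>" "\<beta> < pi" "0 \<le> Im q" "0 < Im (q * cis (- \<beta>))"
  shows "\<beta> < Arg q"
proof -
  have q0: "q \<noteq> 0" using assms(4) by auto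
  have "0 \<le> Arg q" "Arg q \<le> pi" using assms(3) Arg_less_0 Arg_le_pi by auto
  then have "Arg (q * cis (- \<beta>)) = Arg q - \<beta>"
    using assms(1,2) q0 by (subst Arg_times) (auto simp: Arg_cis)
  moreover have "0 < Arg (q * cis (- \<beta>))" using assms(4) Arg_pos_iff by blast
  ultimately show ?thesis by simp
qed

lemma vec_angle_gt_of_Im:
  assumes "a \<noteq> 0" "0 < \<beta>" "\<beta> < pi" "0 \<le> Im (b / a)" "0 < Im (b / a * cis (- \<beta>))"
  shows "\<beta> < vec_angle a b"
proof -
  have "b \<noteq> 0" using assms(5) by auto
  then show ?thesis
    using Arg_gt_of_Im[OF assms(2-5)] vec_angle_eq_abs_Arg[OF assms(1)] by simp
qed

lemma vec_angle_gt_of_Im':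
  assumes "a \<noteq> 0" "0 < \<beta>" "\<beta> < pi" "Im (b / a) \<le> 0" "Im (b / a * cis \<beta>) < 0"
  shows "\<beta> < vec_angle a b"
proof -
  have "cnj b / cnj a * cis (- \<beta>) = cnj (b / a * cis \<beta>)" by (simp add: cis_cnj)
  then have "\<beta> < vec_angle (cnj a) (cnj b)"
    using assms by (intro vec_angle_gt_of_Im) (auto simp flip: complex_cnj_divide)
  moreover have "vec_angle (cnj a) (cnj b) = vec_angle a b"
    by (simp add: vec_angle_def inner_complex_def)
  ultimately show ?thesis by simp
qed

lemma Im_divide_swap: "Im (u / w) < 0 \<longleftrightarrow> 0 < Im (w / u)"
proof (cases "u = 0 \<or> w = 0")
  case False
  define k where "k = (cmod u)\<^sup>2 / (cmod w)\<^sup>2"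
  have "Im (u / w) = - (Im (w / u) * k)"
    using False by (simp add: k_def Im_divide' field_simps)
  moreover have "0 < k" using False by (simp add: k_def)
  ultimately show ?thesis by (simp add: zero_less_mult_iff)
qed auto

lemma Arg_in_sector:
  assumes z: "0 < Im z" and \<zeta>: "\<zeta> \<noteq> 0" "0 \<le> Im \<zeta>" "Im (\<zeta> / z) \<le> 0"
  shows "0 \<le> Arg \<zeta>" "Arg \<zeta> \<le> Arg z"
proof -
  show "0 \<le> Arg \<zeta>" using \<zeta>(2) Arg_less_0 by blast
  moreover have "0 < Arg z" "Arg z < pi" using z Arg_lt_pi by blast+
  moreover have "Arg \<zeta> \<le> pi" by (rule Arg_le_pi)
  ultimately have A: "Arg (\<zeta> / z) = Arg \<zeta> - Arg z"
    using z \<zeta> by (subst Arg_divide') auto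
  show "Arg \<zeta> \<le> Arg z"
  proof (rule ccontr)
    assume "\<not> Arg \<zeta> \<le> Arg z"
    then have "0 < Arg (\<zeta> / z)" "Arg (\<zeta> / z) < pi" using A \<open>0 < Arg z\<close> \<open>Arg \<zeta> \<le> pi\<close> by auto
    then have "0 < Im (\<zeta> / z)" using Arg_lt_pi by blast
    then show False using \<zeta>(3) by simp
  qed
qed

lemma vec_angle_le_in_sector:
  assumes d: "d1 \<noteq> 0" "0 < Im (d2 / d1)"
    and e1: "e1 \<noteq> 0" "0 \<le> Im (e1 / d1)" "Im (e1 / d2) \<le> 0"
    and e2: "e2 \<noteq> 0" "0 \<le> Im (e2 / d1)" "Im (e2 / d2) \<le> 0"
  shows "vec_angle e1 e2 \<le> vec_angle d1 d2"
proof -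
  define z where "z = d2 / d1"
  have d2: "d2 \<noteq> 0" using d(2) by auto
  have sector: "0 \<le> Arg (e / d1) \<and> Arg (e / d1) \<le> Arg z"
    if "e \<noteq> 0" "0 \<le> Im (e / d1)" "Im (e / d2) \<le> 0" for e
  proof -
    have "e / d1 / z = e / d2" using d d2 by (simp add: z_def)
    then show ?thesis using Arg_in_sector[of z "e / d1"] that d by (simp add: z_def)
  qed
  have s1: "0 \<le> Arg (e1 / d1)" "Arg (e1 / d1) \<le> Arg z" using sector e1 by auto
  have s2: "0 \<le> Arg (e2 / d1)" "Arg (e2 / d1) \<le> Arg z" using sector e2 by auto
  have "Arg z < pi" using d(2) Arg_lt_pi by (auto simp: z_def)
  moreover have "e2 / e1 = e2 / d1 / (e1 / d1)" using d e1 by (simp add: field_simps)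
  moreover have "\<not> pi < Arg (e2 / d1) - Arg (e1 / d1)" "\<not> Arg (e2 / d1) - Arg (e1 / d1) \<le> - pi"
    using s1 s2 \<open>Arg z < pi\<close> by linarith+
  moreover have "e1 / d1 \<noteq> 0" "e2 / d1 \<noteq> 0" using d e1 e2 by auto
  ultimately have "Arg (e2 / e1) = Arg (e2 / d1) - Arg (e1 / d1)"
    using Arg_divide'[of "e2 / d1" "e1 / d1"] by (simp only: if_False add_0_right not_False_eq_True True_implies_equals)
  then have "vec_angle e1 e2 = \<bar>Arg (e2 / d1) - Arg (e1 / d1)\<bar>"
    using vec_angle_eq_abs_Arg[OF e1(1) e2(1)] by simp
  also have "\<dots> \<le> \<bar>Arg z\<bar>" using s1 s2 by linarith
  also have "\<dots> = vec_angle d1 d2" using vec_angle_eq_abs_Arg[OF d(1) d2] by (simp add: z_def)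
  finally show ?thesis .
qed

lemma sign_Im_of_halfplane:
  fixes a d1 d2 e :: complex
  assumes "a \<bullet> d1 = 0" "a \<bullet> d2 < 0" "a \<bullet> e \<le> 0" "d1 \<noteq> 0"
  shows "0 \<le> Im (e / d1) * Im (d2 / d1)"
proof -
  define m where "m = cnj a * d1"
  have inner_eq: "a \<bullet> f = - Im m * Im (f / d1)" for f
  proof -
    have "a \<bullet> f = Re (m * (f / d1))" using assms(4) by (simp add: m_def inner_complex_def)
    also have "\<dots> = Re m * Re (f / d1) - Im m * Im (f / d1)" by (rule times_complex.sel(1))
    also have "Re m = 0" using assms(1) by (simp add: m_def inner_complex_def)
    finally show ?thesis by simp
  qed
  have "- Im m * Im (d2 / d1) < 0" "- Im m * Im (e / d1) \<le> 0"
    using assms(2,3) by (simp_all add: inner_eq)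
  then show ?thesis by (cases "0 < Im m") (auto simp: zero_less_mult_iff zero_le_mult_iff)
qed

lemma exposed_edge_separates:
  fixes K :: "complex set"
  assumes fu: "closed_segment v u face_of K" and fw: "closed_segment v w face_of K"
    and uvw: "u \<noteq> v" "w \<noteq> v" "u \<noteq> w"
    and K: "K \<subseteq> {z. a \<bullet> z \<le> b}" and F: "closed_segment v u = K \<inter> {z. a \<bullet> z = b}"
  shows "a \<bullet> v = b" "a \<bullet> u = b" "a \<bullet> w < b"
proof -
  show "a \<bullet> v = b" "a \<bullet> u = b" using F by auto
  have wK: "w \<in> K" and uK: "u \<in> K" using face_of_imp_subset[OF fw] face_of_imp_subset[OF fu] by auto
  show "a \<bullet> w < b"
  proof (rule ccontr)
    assume "\<not> a \<bullet> w < b"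
    then have wu: "w \<in> closed_segment v u" using K F wK by force
    then have "w \<in> open_segment v u" using uvw by (auto simp: open_segment_def)
    then have "u \<in> closed_segment v w" using fw uK unfolding face_of_def by blast
    then have "closed_segment v u \<subseteq> closed_segment v w" "closed_segment v w \<subseteq> closed_segment v u"
      using wu by (auto simp: subset_closed_segment)
    then have "closed_segment v u = closed_segment v w" by auto
    then have "{v, u} = {v, w}" by simp
    then show False using uvw by auto
  qed
qed

lemma not_collinear_if_separated:
  assumes "a \<bullet> v = b" "a \<bullet> u = b" "a \<bullet> w < b" "u \<noteq> v"
  shows "Im ((w - v) / (u - v)) \<noteq> 0"
proof
  assume real: "Im ((w - v) / (u - v)) = 0"
  define r where "r = Re ((w - v) / (u - v))"
  have "(w - v) / (u - v) = of_real r" using real by (simp add: r_def complex_eq_iff)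
  then have "w - v = r *\<^sub>R (u - v)" using assms(4) by (simp add: field_simps scaleR_conv_of_real)
  then have "a \<bullet> (w - v) = r * (a \<bullet> (u - v))" by simp
  then show False using assms by (simp add: inner_diff_right)
qed

lemma vec_angle_le_in_wedge:
  assumes H1: "\<And>z. z \<in> K \<Longrightarrow> a \<bullet> z \<le> b" "a \<bullet> v = b" "a \<bullet> u = b" "a \<bullet> w < b"
    and H2: "\<And>z. z \<in> K \<Longrightarrow> a' \<bullet> z \<le> b'" "a' \<bullet> v = b'" "a' \<bullet> w = b'" "a' \<bullet> u < b'"
    and orient: "0 < Im ((w - v) / (u - v))"
    and x: "x \<in> K" "x \<noteq> v" and y: "y \<in> K" "y \<noteq> v"
  shows "vec_angle (x - v) (y - v) \<le> vec_angle (u - v) (w - v)"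
proof -
  define d1 d2 where "d1 = u - v" and "d2 = w - v"
  have d1: "d1 \<noteq> 0" and d2: "d2 \<noteq> 0" using orient by (auto simp: d1_def d2_def)
  have p: "0 < Im (d2 / d1)" and n: "Im (d1 / d2) < 0"
    using orient Im_divide_swap by (auto simp: d1_def d2_def)
  have a: "a \<bullet> d1 = 0" "a \<bullet> d2 < 0" and a': "a' \<bullet> d2 = 0" "a' \<bullet> d1 < 0"
    using H1(2-4) H2(2-4) by (auto simp: d1_def d2_def inner_diff_right)
  have in_sector: "0 \<le> Im ((z - v) / d1)" "Im ((z - v) / d2) \<le> 0" if "z \<in> K" for z
  proof -
    have "a \<bullet> (z - v) \<le> 0" "a' \<bullet> (z - v) \<le> 0"
      using H1(1,2) H2(1,2) that by (auto simp: inner_diff_right)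
    then show "0 \<le> Im ((z - v) / d1)" "Im ((z - v) / d2) \<le> 0"
      using sign_Im_of_halfplane[OF a _ d1] sign_Im_of_halfplane[OF a' _ d2] p n
      by (auto simp: zero_le_mult_iff)
  qed
  show ?thesis unfolding d1_def[symmetric] d2_def[symmetric]
    using x y by (intro vec_angle_le_in_sector[OF d1 p]) (auto simp: in_sector)
qed

lemma hull_internal_angle_ge:
  fixes S :: "complex set"
  assumes S: "finite S" and ang: "hull_internal_angle S v \<alpha>"
    and x: "x \<in> S" "x \<noteq> v" and y: "y \<in> S" "y \<noteq> v"
  shows "vec_angle (x - v) (y - v) \<le> \<alpha>"
proof -
  define K where "K = convex hull S"
  obtain u w where uvw: "u \<noteq> v" "w \<noteq> v" "u \<noteq> w"
    and fu: "closed_segment v u face_of K" and fw: "closed_segment v w face_of K"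
    and \<alpha>: "\<alpha> = vec_angle (u - v) (w - v)"
    using ang unfolding hull_internal_angle_def K_def by blast
  have "polyhedron K" unfolding K_def using S by (intro polytope_imp_polyhedron polytope_convex_hull)
  then have exposed: "\<exists>a b. K \<subseteq> {z. a \<bullet> z \<le> b} \<and> F = K \<inter> {z. a \<bullet> z = b}" if "F face_of K" for F
    using that exposed_face_of_polyhedron unfolding exposed_face_of_def by blast
  obtain a b where ab: "K \<subseteq> {z. a \<bullet> z \<le> b}" "closed_segment v u = K \<inter> {z. a \<bullet> z = b}"
    using exposed[OF fu] by blast
  obtain a' b' where ab': "K \<subseteq> {z. a' \<bullet> z \<le> b'}" "closed_segment v w = K \<inter> {z. a' \<bullet> z = b'}"
    using exposed[OF fw] by blast
  note H1 = exposed_edge_separates[OF fu fw uvw ab]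
  note H2 = exposed_edge_separates[OF fw fu uvw(2,1) uvw(3)[symmetric] ab']
  have xy: "x \<in> K" "y \<in> K" using x y hull_subset[of S convex] by (auto simp: K_def)
  have "Im ((w - v) / (u - v)) \<noteq> 0" using not_collinear_if_separated[OF H1 uvw(1)] .
  then consider "0 < Im ((w - v) / (u - v))" | "0 < Im ((u - v) / (w - v))"
    using Im_divide_swap[of "w - v" "u - v"] by (meson linorder_neqE_linordered_idom)
  then show ?thesis
  proof cases
    case 1
    then show ?thesis using vec_angle_le_in_wedge[OF _ H1 _ H2] ab(1) ab'(1) x y xy \<alpha> by blast
  next
    case 2
    then have "vec_angle (x - v) (y - v) \<le> vec_angle (w - v) (u - v)"
      using vec_angle_le_in_wedge[OF _ H2 _ H1] ab(1) ab'(1) x y xy by blast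
    then show ?thesis by (simp add: \<alpha> vec_angle_sym)
  qed
qed

lemma hull_internal_angle_vertex_in:
  assumes "hull_internal_angle S v \<alpha>"
  shows "v \<in> S"
  using assms extreme_point_of_convex_hull by (auto simp: hull_internal_angle_def)

lemma wide_angle_ahead:
  assumes D: "D \<noteq> 0" and l: "0 < l" and x: "x - v = of_real l * D" and y: "y - v = Z * D"
    and \<beta>: "0 < \<beta>" "\<beta> < pi" and Z: "0 \<le> Im Z" "0 < Im (Z * cis (- \<beta>))"
  shows "y \<noteq> v" "\<beta> < vec_angle (x - v) (y - v)"
proof -
  have q: "(y - v) / (x - v) = Z / of_real l" using D l by (simp add: x y)
  have "Z / of_real l * cis (- \<beta>) = Z * cis (- \<beta>) / of_real l" by simp
  then have "0 \<le> Im ((y - v) / (x - v))" "0 < Im ((y - v) / (x - v) * cis (- \<beta>))"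
    unfolding q using Z l by (simp_all only: Im_divide_of_real divide_nonneg_pos divide_pos_pos)
  moreover have "x - v \<noteq> 0" using D l x by simp
  ultimately show "\<beta> < vec_angle (x - v) (y - v)" using vec_angle_gt_of_Im[OF _ \<beta>] by blast
  show "y \<noteq> v" using Z(2) D y by auto
qed

lemma wide_angle_behind:
  assumes D: "D \<noteq> 0" and l: "0 < l" and x: "x - v = - of_real l * D" and y: "y - v = Z * D"
    and \<beta>: "0 < \<beta>" "\<beta> < pi" and Z: "0 \<le> Im Z" "0 < Im (Z * cis \<beta>)"
  shows "y \<noteq> v" "\<beta> < vec_angle (x - v) (y - v)"
proof -
  have q: "(y - v) / (x - v) = - (Z / of_real l)" using D l by (simp add: x y)
  have "- (Z / of_real l) * cis \<beta> = - (Z * cis \<beta> / of_real l)" by simp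
  then have "Im ((y - v) / (x - v)) \<le> 0" "Im ((y - v) / (x - v) * cis \<beta>) < 0"
    unfolding q using Z l by (simp_all add: Im_divide_of_real)
  moreover have "x - v \<noteq> 0" using D l x by simp
  ultimately show "\<beta> < vec_angle (x - v) (y - v)" using vec_angle_gt_of_Im'[OF _ \<beta>] by blast
  show "y \<noteq> v" using Z(2) D y by auto
qed

lemma cos_le_reflected:
  fixes a x :: real
  assumes "0 \<le> a" "a \<le> x" "x \<le> 2 * pi - a"
  shows "cos x \<le> cos a"
proof (cases "x \<le> pi")
  case True
  then show ?thesis using assms by (intro cos_monotone_0_pi_le) auto
next
  case False
  then have "cos (2 * pi - x) \<le> cos a" using assms by (intro cos_monotone_0_pi_le) auto
  then show ?thesis by simp
qed

text \<open>A regular n-gon with centre c, circumradius rho and rotation theta; vertices and edges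
  are indexed by integers modulo n.\<close>

locale regular_polygon =
  fixes n :: nat and c :: complex and \<rho> \<theta> :: real
  assumes n_ge_4: "4 \<le> n" and radius_pos: "0 < \<rho>"
begin

definition vertex :: "int \<Rightarrow> complex" where
  "vertex j = c + of_real \<rho> * cis (\<theta> + 2 * pi * of_int j / real n)"

definition edge :: "int \<Rightarrow> complex set" where
  "edge j = closed_segment (vertex j) (vertex (j + 1))"

definition edge_relint :: "int \<Rightarrow> complex set" where
  "edge_relint j = open_segment (vertex j) (vertex (j + 1))"

definition dir :: "int \<Rightarrow> complex" where
  "dir j = vertex (j + 1) - vertex j"

definition rot :: "real \<Rightarrow> complex" where
  "rot x = cis (2 * pi * x / real n)"

definition angle_bound :: real where
  "angle_bound = pi * (real n - 3) / real n"

lemma n_pos: "0 < real n" and n_ge_4_real: "4 \<le> real n"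
  using n_ge_4 by simp_all

lemma rot_mult: "rot a * rot b = rot (a + b)"
  by (simp add: rot_def cis_mult add_divide_distrib distrib_left)

lemma Im_rot: "Im (rot x) = sin (2 * pi * x / real n)"
  by (simp add: rot_def)

lemma vertex_rot: "vertex j = c + of_real \<rho> * cis \<theta> * rot (of_int j)"
  by (simp add: vertex_def rot_def mult.assoc cis_mult)

lemma vertex_periodic: "vertex (j + int n * q) = vertex j"
proof -
  have "2 * pi * (real n * of_int q) / real n = 2 * pi * real_of_int q" using n_pos by simp
  then have "rot (real n * of_int q) = 1" unfolding rot_def by (simp only: cis_multiple_2pi Ints_of_int)
  then have "rot (of_int (j + int n * q)) = rot (of_int j)" by (simp flip: rot_mult)
  then show ?thesis by (simp add: vertex_rot)
qed

lemma vertex_mod: "vertex (j mod int n) = vertex j"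
  using vertex_periodic[of "j mod int n" "j div int n"] by (simp add: mult.commute)

lemma edge_mod: "edge (j mod int n) = edge j" and edge_relint_mod: "edge_relint (j mod int n) = edge_relint j"
  using vertex_mod[of j] vertex_mod[of "j + 1"] vertex_mod[of "j mod int n + 1"]
  by (simp_all add: edge_def edge_relint_def mod_add_left_eq)

lemma edge_periodic: "edge (j + int n * q) = edge j"
  by (metis edge_mod mod_mult_self2)

lemma dir_eq: "dir k = of_real \<rho> * cis \<theta> * rot (of_int k) * (rot 1 - 1)"
  by (simp add: dir_def vertex_rot algebra_simps rot_mult)

lemma rot_1_ne_1: "rot 1 \<noteq> 1"
proof
  assume "rot 1 = 1"
  then have "cos (2 * pi / real n) = 1" by (metis cis.sel(1) one_complex.simps(1) mult_1_right rot_def)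
  moreover have "cos (2 * pi / real n) < cos 0"
    using n_ge_4_real by (intro cos_monotone_0_pi) (auto simp: field_simps)
  ultimately show False by simp
qed

lemma dir_nonzero: "dir k \<noteq> 0"
  using radius_pos rot_1_ne_1 by (simp add: dir_eq rot_def)

lemma vertex_diff_dir:
  assumes "rot (of_int m) - rot (of_int m') = Z * (rot 1 - 1)"
  shows "vertex (k + m) - vertex (k + m') = Z * dir k"
proof -
  have "vertex (k + m) - vertex (k + m') = of_real \<rho> * cis \<theta> * rot (of_int k) * (rot (of_int m) - rot (of_int m'))"
    by (simp add: vertex_rot algebra_simps flip: rot_mult)
  then show ?thesis by (simp add: assms dir_eq)
qed

lemma vertex_offsets:
  "vertex (k - 1) = vertex k - rot (-1) * dir k"
  "vertex (k - 2) = vertex k - (rot (-1) + rot (-2)) * dir k"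
  "vertex (k + 2) = vertex (k + 1) + rot 1 * dir k"
  "vertex (k + 3) = vertex (k + 1) + (rot 1 + rot 2) * dir k"
proof -
  have r: "rot (-1) * rot 1 = 1" "rot (-2) * rot 1 = rot (-1)" "rot 1 * rot 1 = rot 2"
    "rot 2 * rot 1 = rot 3" "rot 0 = 1"
    by (simp_all add: rot_mult) (simp_all add: rot_def)
  have "rot (of_int (-1)) - rot (of_int 0) = - rot (-1) * (rot 1 - 1)"
    "rot (of_int (-2)) - rot (of_int 0) = - (rot (-1) + rot (-2)) * (rot 1 - 1)"
    "rot (of_int 2) - rot (of_int 1) = rot 1 * (rot 1 - 1)"
    "rot (of_int 3) - rot (of_int 1) = (rot 1 + rot 2) * (rot 1 - 1)"
    using r by (simp_all add: algebra_simps)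
  from this[THEN vertex_diff_dir[where k = k]] show
    "vertex (k - 1) = vertex k - rot (-1) * dir k"
    "vertex (k - 2) = vertex k - (rot (-1) + rot (-2)) * dir k"
    "vertex (k + 2) = vertex (k + 1) + rot 1 * dir k"
    "vertex (k + 3) = vertex (k + 1) + (rot 1 + rot 2) * dir k"
    by (simp_all add: algebra_simps)
qed

lemma angle_bound_bounds: "0 < angle_bound" "angle_bound < pi"
  using n_ge_4_real by (auto simp: angle_bound_def field_simps)

lemma rot_cis_angle_bound:
  "rot m * cis (- angle_bound) = - cis (pi * (2 * m + 3) / real n)"
  "rot m * cis angle_bound = - cis (pi * (2 * m - 3) / real n)"
proof -
  have flip: "cis (x + pi) = - cis x" "cis (x - pi) = - cis x" for x
    by (simp_all add: complex_eq_iff cos_add sin_add cos_diff sin_diff)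
  have "rot m * cis (- angle_bound) = cis (pi * (2 * m + 3) / real n - pi)"
    unfolding rot_def angle_bound_def cis_mult using n_pos
    by (intro arg_cong[where f = cis]) (simp add: field_simps)
  moreover have "rot m * cis angle_bound = cis (pi * (2 * m - 3) / real n + pi)"
    unfolding rot_def angle_bound_def cis_mult using n_pos
    by (intro arg_cong[where f = cis]) (simp add: field_simps)
  ultimately show "rot m * cis (- angle_bound) = - cis (pi * (2 * m + 3) / real n)"
    "rot m * cis angle_bound = - cis (pi * (2 * m - 3) / real n)"
    by (simp_all only: flip)
qed

lemma sines_pos: "0 < sin (pi / real n)" "0 < sin (2 * pi / real n)" "0 \<le> sin (4 * pi / real n)"
  using n_ge_4_real by (auto intro!: sin_gt_zero sin_ge_zero simp: field_simps)

lemma wide_angle_two_edges_back: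
  assumes t: "0 \<le> t" and l: "0 < l" and s: "0 < s" "s \<le> 1"
    and v: "v = vertex k + of_real t * dir k" and x: "x - v = of_real l * dir k"
    and y: "y = vertex (k - 2) + of_real s * (vertex (k - 1) - vertex (k - 2))"
  shows "y \<noteq> v" "angle_bound < vec_angle (x - v) (y - v)"
proof -
  define Z where "Z = of_real s * rot (-2) - (rot (-1) + rot (-2)) - of_real t"
  have yv: "y - v = Z * dir k" by (simp add: y v Z_def vertex_offsets algebra_simps)
  have "Im Z = sin (2 * pi / real n) + (1 - s) * sin (4 * pi / real n)"
    by (simp add: Z_def Im_rot algebra_simps)
  then have "0 \<le> Im Z" using s sines_pos by simp
  have "Z * cis (- angle_bound) = of_real s * (rot (-2) * cis (- angle_bound))
      - (rot (-1) * cis (- angle_bound) + rot (-2) * cis (- angle_bound)) - of_real t * cis (- angle_bound)"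
    by (simp add: Z_def algebra_simps)
  then have "Im (Z * cis (- angle_bound)) = s * sin (pi / real n) + t * sin angle_bound"
    by (simp add: rot_cis_angle_bound)
  then have "0 < Im (Z * cis (- angle_bound))"
    using s t sines_pos angle_bound_bounds by (simp add: add_pos_nonneg sin_ge_zero)
  then show "y \<noteq> v" "angle_bound < vec_angle (x - v) (y - v)"
    using wide_angle_ahead[OF dir_nonzero l x yv angle_bound_bounds \<open>0 \<le> Im Z\<close>] by auto
qed

lemma wide_angle_one_edge_back:
  assumes t: "0 \<le> t" and l: "0 < l" and s: "0 \<le> s" "s < 1"
    and v: "v = vertex k + of_real t * dir k" and x: "x - v = of_real l * dir k"
    and y: "y = vertex (k - 1) + of_real s * (vertex k - vertex (k - 1))"
  shows "y \<noteq> v" "angle_bound < vec_angle (x - v) (y - v)"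
proof -
  define Z where "Z = - of_real (1 - s) * rot (-1) - of_real t"
  have yv: "y - v = Z * dir k" by (simp add: y v Z_def vertex_offsets algebra_simps)
  have "Im Z = (1 - s) * sin (2 * pi / real n)"
    by (simp add: Z_def Im_rot algebra_simps)
  then have "0 \<le> Im Z" using s sines_pos by simp
  have "Z * cis (- angle_bound) = - of_real (1 - s) * (rot (-1) * cis (- angle_bound))
      - of_real t * cis (- angle_bound)"
    by (simp add: Z_def algebra_simps)
  also have "\<dots> = of_real (1 - s) * cis (pi / real n) - of_real t * cis (- angle_bound)"
    unfolding rot_cis_angle_bound by (simp add: algebra_simps)
  finally have eq: "Z * cis (- angle_bound) = \<dots>" .
  have "Im (Z * cis (- angle_bound)) = (1 - s) * sin (pi / real n) + t * sin angle_bound"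
    unfolding eq by simp
  then have "0 < Im (Z * cis (- angle_bound))"
    using s t sines_pos angle_bound_bounds by (simp add: add_pos_nonneg sin_ge_zero)
  then show "y \<noteq> v" "angle_bound < vec_angle (x - v) (y - v)"
    using wide_angle_ahead[OF dir_nonzero l x yv angle_bound_bounds \<open>0 \<le> Im Z\<close>] by auto
qed

lemma wide_angle_two_edges_ahead:
  assumes t: "0 \<le> t" and l: "0 < l" and s: "0 \<le> s" "s < 1"
    and v: "v = vertex (k + 1) - of_real t * dir k" and x: "x - v = - of_real l * dir k"
    and y: "y = vertex (k + 2) + of_real s * (vertex (k + 3) - vertex (k + 2))"
  shows "y \<noteq> v" "angle_bound < vec_angle (x - v) (y - v)"
proof -
  define Z where "Z = rot 1 + of_real s * rot 2 + of_real t"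
  have yv: "y - v = Z * dir k" by (simp add: y v Z_def vertex_offsets algebra_simps)
  have "Im Z = sin (2 * pi / real n) + s * sin (4 * pi / real n)"
    by (simp add: Z_def Im_rot algebra_simps)
  then have "0 \<le> Im Z" using s sines_pos by simp
  have "Z * cis angle_bound = rot 1 * cis angle_bound + of_real s * (rot 2 * cis angle_bound)
      + of_real t * cis angle_bound"
    by (simp add: Z_def algebra_simps)
  also have "\<dots> = - cis (- pi / real n) - of_real s * cis (pi / real n) + of_real t * cis angle_bound"
    by (simp add: rot_cis_angle_bound)
  finally have eq: "Z * cis angle_bound = \<dots>" .
  have "Im (Z * cis angle_bound) = (1 - s) * sin (pi / real n) + t * sin angle_bound"
    unfolding eq by (simp add: algebra_simps)
  then have "0 < Im (Z * cis angle_bound)"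
    using s t sines_pos angle_bound_bounds by (simp add: add_pos_nonneg sin_ge_zero)
  then show "y \<noteq> v" "angle_bound < vec_angle (x - v) (y - v)"
    using wide_angle_behind[OF dir_nonzero l x yv angle_bound_bounds \<open>0 \<le> Im Z\<close>] by auto
qed

text \<open>The support function of edge j: the component of z - c along the outer unit
  normal of edge j. It equals the apothem on edge j and is at most the apothem at every
  vertex; this separates the edges from each other.\<close>

definition support :: "int \<Rightarrow> complex \<Rightarrow> real" where
  "support j z = cis (\<theta> + pi * (2 * of_int j + 1) / real n) \<bullet> (z - c)"

definition apothem :: real where
  "apothem = \<rho> * cos (pi / real n)"

lemma support_vertex: "support j (vertex m) = \<rho> * cos (pi * (2 * of_int (m - j) - 1) / real n)"
proof -
  have "cis a \<bullet> (of_real \<rho> * cis b) = \<rho> * cos (b - a)" for a b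
    by (simp add: inner_complex_def cos_diff algebra_simps)
  moreover have "\<theta> + 2 * pi * of_int m / real n - (\<theta> + pi * (2 * of_int j + 1) / real n)
      = pi * (2 * of_int (m - j) - 1) / real n"
    using n_pos by (simp add: field_simps)
  ultimately show ?thesis by (simp add: support_def vertex_def)
qed

lemma cos_odd_multiple:
  fixes d :: int
  shows "cos (pi * (2 * of_int d - 1) / real n) \<le> cos (pi / real n)"
    and "cos (pi * (2 * of_int d - 1) / real n) = cos (pi / real n) \<Longrightarrow> int n dvd d \<or> int n dvd (d - 1)"
proof -
  define r where "r = d mod int n"
  have r: "0 \<le> r" "r < int n" using n_ge_4 by (auto simp: r_def)
  have "d = r + int n * (d div int n)" by (simp add: r_def)
  then have "real_of_int d = of_int r + real n * of_int (d div int n)"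
    by (metis of_int_add of_int_mult of_int_of_nat_eq)
  then have "pi * (2 * of_int d - 1) / real n = pi * (2 * of_int r - 1) / real n + 2 * pi * of_int (d div int n)"
    using n_pos by (simp add: field_simps)
  then have reduce: "cos (pi * (2 * of_int d - 1) / real n) = cos (pi * (2 * of_int r - 1) / real n)"
    by (simp add: cos_add)
  have "cos (pi * (2 * of_int d - 1) / real n) = cos (pi / real n) \<and> (int n dvd d \<or> int n dvd (d - 1))
      \<or> cos (pi * (2 * of_int d - 1) / real n) < cos (pi / real n)"
  proof (cases "r \<le> 1")
    case True
    then have "r = 0 \<or> r = 1" using r by auto
    moreover have "int n dvd d \<longleftrightarrow> r = 0" by (simp add: r_def dvd_eq_mod_eq_0)
    moreover have "int n dvd (d - 1) \<longleftrightarrow> r = 1"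
      using n_ge_4 mod_eq_dvd_iff[of d "int n" 1] by (simp add: r_def)
    ultimately show ?thesis unfolding reduce by (auto simp: minus_divide_left[symmetric])
  next
    case False
    have "3 * pi / real n \<le> pi * (2 * of_int r - 1) / real n"
      using False n_pos by (intro divide_right_mono) auto
    moreover have "real_of_int (r + 1) \<le> real_of_int (int n)" using r by (simp only: of_int_le_iff)
    then have "pi * (2 * of_int r - 1) / real n \<le> pi * (2 * real n - 3) / real n"
      using n_pos by (intro divide_right_mono mult_left_mono) auto
    moreover have "pi * (2 * real n - 3) / real n = 2 * pi - 3 * pi / real n"
      using n_pos by (simp add: field_simps)
    ultimately have "cos (pi * (2 * of_int r - 1) / real n) \<le> cos (3 * pi / real n)"
      using n_pos by (intro cos_le_reflected) auto
    also have "\<dots> < cos (pi / real n)"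
      using n_ge_4_real by (intro cos_monotone_0_pi) (auto simp: field_simps)
    finally show ?thesis unfolding reduce by simp
  qed
  then show "cos (pi * (2 * of_int d - 1) / real n) \<le> cos (pi / real n)"
    and "cos (pi * (2 * of_int d - 1) / real n) = cos (pi / real n) \<Longrightarrow> int n dvd d \<or> int n dvd (d - 1)"
    by auto
qed

lemma support_vertex_le: "support j (vertex m) \<le> apothem"
  using cos_odd_multiple(1)[of "m - j"] radius_pos by (simp add: support_vertex apothem_def)

lemma support_vertex_eq:
  "support j (vertex m) = apothem \<Longrightarrow> int n dvd (m - j) \<or> int n dvd (m - j - 1)"
  using cos_odd_multiple(2)[of "m - j"] radius_pos by (simp add: support_vertex apothem_def)

lemma support_combination:
  "support j ((1 - u) *\<^sub>R p + u *\<^sub>R q) = (1 - u) * support j p + u * support j q"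
  by (simp add: support_def inner_diff_right inner_add_right algebra_simps)

lemma support_edge: "z \<in> edge j \<Longrightarrow> support j z = apothem"
proof -
  assume "z \<in> edge j"
  then obtain u where u: "z = (1 - u) *\<^sub>R vertex j + u *\<^sub>R vertex (j + 1)"
    by (auto simp: edge_def closed_segment_def)
  have "support j z = (1 - u) * support j (vertex j) + u * support j (vertex (j + 1))"
    unfolding u by (rule support_combination)
  moreover have "support j (vertex j) = apothem" "support j (vertex (j + 1)) = apothem"
    by (simp_all add: support_vertex apothem_def minus_divide_left[symmetric])
  ultimately show ?thesis by (simp add: algebra_simps)
qed

lemma support_max_on_segment:
  assumes z: "z \<in> closed_segment p q" and p: "support j p \<le> apothem" and q: "support j q < apothem"
    and max: "support j z = apothem"
  shows "z = p"
proof -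
  obtain u where u: "0 \<le> u" "u \<le> 1" "z = (1 - u) *\<^sub>R p + u *\<^sub>R q"
    using z by (auto simp: closed_segment_def)
  have sum: "(1 - u) * support j p + u * support j q = apothem" using max u(3) support_combination by simp
  have "u = 0"
  proof (rule ccontr)
    assume "u \<noteq> 0"
    then have "u * support j q < u * apothem" using u(1) q by simp
    moreover have "(1 - u) * support j p \<le> (1 - u) * apothem" using u p by (intro mult_left_mono) auto
    moreover have "(1 - u) * apothem + u * apothem = apothem" by (simp add: algebra_simps)
    ultimately show False using sum by linarith
  qed
  then show ?thesis using u(3) by simp
qed

lemma half_open_edges_disjoint:
  assumes j: "0 \<le> j" "j < int n" and k: "0 \<le> k" "k < int n" and "j \<noteq> k"
    and z: "z \<in> edge j" "z \<noteq> vertex j" "z \<in> edge k" "z \<noteq> vertex k"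
  shows False
proof -
  have next_vertex: "int n dvd (b + 1 - a)"
    if "0 \<le> a" "a < int n" "0 \<le> b" "b < int n" "a \<noteq> b" "z \<in> edge a" "z \<in> edge b" "z \<noteq> vertex b"
    for a b
  proof -
    have "support a (vertex (b + 1)) = apothem"
    proof (rule ccontr)
      assume "support a (vertex (b + 1)) \<noteq> apothem"
      then have "support a (vertex (b + 1)) < apothem" using support_vertex_le[of a "b + 1"] by simp
      then have "z = vertex b"
        using that support_edge support_vertex_le by (intro support_max_on_segment) (auto simp: edge_def)
      then show False using that by simp
    qed
    then have "int n dvd (b + 1 - a) \<or> int n dvd (b - a)"
      using support_vertex_eq[of a "b + 1"] by (simp add: algebra_simps)
    moreover have "\<not> int n dvd (b - a)"
      using that dvd_imp_le_int[of "b - a" "int n"] by auto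
    ultimately show ?thesis by simp
  qed
  have "int n dvd (k + 1 - j) + (j + 1 - k)"
    using next_vertex[of j k] next_vertex[of k j] assms by (intro dvd_add) auto
  then have "int n dvd 2" by simp
  then show False using n_ge_4 by (auto dest: zdvd_imp_le)
qed

end

lemma sum_shift_periodic:
  fixes F :: "int \<Rightarrow> nat"
  assumes "F (int n) = F 0"
  shows "(\<Sum>i<n. F (int i + 1)) = (\<Sum>i<n. F (int i))"
proof -
  have "(\<Sum>i<Suc n. F (int i)) = F 0 + (\<Sum>i<n. F (int (Suc i)))"
    using sum.lessThan_Suc_shift[of "\<lambda>i. F (int i)" n] by simp
  moreover have "(\<Sum>i<Suc n. F (int i)) = (\<Sum>i<n. F (int i)) + F (int n)" by simp
  ultimately show ?thesis using assms by (simp add: add.commute)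
qed

locale pre_regular_polygon = regular_polygon +
  fixes S :: "complex set"
  assumes finite_S: "finite S" and card_S: "card S = n"
    and adjacent_edges: "\<And>j. (card (S \<inter> edge j) = 2 \<and> S \<inter> edge_relint (j + 1) = {})
                            \<or> (card (S \<inter> edge (j + 1)) = 2 \<and> S \<inter> edge_relint j = {})"
begin

definition full :: "int \<Rightarrow> bool" where
  "full j \<longleftrightarrow> card (S \<inter> edge j) = 2"

definition half_edge :: "int \<Rightarrow> complex set" where
  "half_edge j = edge j - {vertex j}"

definition load :: "int \<Rightarrow> nat" where
  "load j = card (S \<inter> half_edge j)"

lemma not_full_neighbours: "\<not> full j \<Longrightarrow> full (j - 1) \<and> full (j + 1)"
  using adjacent_edges[of j] adjacent_edges[of "j - 1"] by (auto simp: full_def)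

lemma full_periodic: "full (j + int n) = full j"
  using edge_periodic[of j 1] by (simp add: full_def)

lemma load_periodic: "load (j + int n) = load j"
  using edge_periodic[of j 1] vertex_periodic[of j 1] by (simp add: load_def half_edge_def)

lemma load_pos: "x \<in> S \<Longrightarrow> x \<in> half_edge j \<Longrightarrow> 1 \<le> load j"
  using finite_S by (auto simp: load_def Suc_le_eq card_gt_0_iff)

lemma load_full: "full j \<Longrightarrow> 1 \<le> load j"
proof -
  assume "full j"
  then obtain a b where "a \<noteq> b" "S \<inter> edge j = {a, b}" by (auto simp: full_def card_2_iff)
  then have "a \<in> S \<inter> half_edge j \<or> b \<in> S \<inter> half_edge j" by (auto simp: half_edge_def)
  then show ?thesis using load_pos by blast
qed

text \<open>A non-full edge j is followed by a full edge j + 1 whose two points lie in the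
  half-open edges j and j + 1 (its first vertex belongs to half-edge j).\<close>

lemma load_pair: "\<not> full j \<Longrightarrow> 2 \<le> load j + load (j + 1)"
proof -
  assume "\<not> full j"
  then have "full (j + 1)" using not_full_neighbours by simp
  then obtain a b where ab: "a \<noteq> b" "S \<inter> edge (j + 1) = {a, b}"
    unfolding full_def by (auto simp: card_2_iff)
  have in_half: "z \<in> half_edge j" if "z = vertex (j + 1)" for z
    using that dir_nonzero[of j] by (auto simp: half_edge_def edge_def dir_def)
  have in_next: "z \<in> half_edge (j + 1)" if "z \<in> edge (j + 1)" "z \<noteq> vertex (j + 1)" for z
    using that by (auto simp: half_edge_def)
  show ?thesis
  proof (cases "a = vertex (j + 1) \<or> b = vertex (j + 1)")
    case True
    then have "vertex (j + 1) \<in> S" using ab(2) by blast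
    then have "1 \<le> load j" using in_half load_pos by blast
    moreover obtain q where "q \<in> S \<inter> edge (j + 1)" "q \<noteq> vertex (j + 1)" using True ab by auto
    then have "1 \<le> load (j + 1)" using in_next load_pos by blast
    ultimately show ?thesis by simp
  next
    case False
    then have "{a, b} \<subseteq> S \<inter> half_edge (j + 1)" using ab in_next by auto
    then have "card {a, b} \<le> load (j + 1)" using finite_S by (auto simp: load_def intro: card_mono)
    then show ?thesis using ab(1) by simp
  qed
qed

text \<open>Every edge index is counted exactly once on the right: a full edge preceded by a full
  edge by itself, and a full edge preceded by a non-full edge together with its predecessor.\<close>

lemma sum_by_blocks:
  fixes h :: "int \<Rightarrow> nat"
  assumes h: "h (int n) = h 0"
  shows "(\<Sum>i<n. h (int i)) = (\<Sum>i<n. (if full (int i) then 0 else h (int i) + h (int i + 1))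
                                  + (if full (int i) \<and> full (int i - 1) then h (int i) else 0))"
proof -
  define F where "F k = (if full (k - 1) then 0 else h k)" for k
  have F: "F (int n) = F 0" using full_periodic[of "-1"] h by (simp add: F_def)
  have "(\<Sum>i<n. (if full (int i) then 0 else h (int i) + h (int i + 1))
                  + (if full (int i) \<and> full (int i - 1) then h (int i) else 0))
      = (\<Sum>i<n. (if full (int i) then 0 else h (int i))
                  + (if full (int i) \<and> full (int i - 1) then h (int i) else 0)) + (\<Sum>i<n. F (int i + 1))"
    unfolding sum.distrib[symmetric] by (intro sum.cong) (auto simp: F_def)
  also have "(\<Sum>i<n. F (int i + 1)) = (\<Sum>i<n. F (int i))" by (rule sum_shift_periodic[OF F])
  also have "(\<Sum>i<n. (if full (int i) then 0 else h (int i))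
                  + (if full (int i) \<and> full (int i - 1) then h (int i) else 0)) + (\<Sum>i<n. F (int i))
      = (\<Sum>i<n. h (int i))"
    using not_full_neighbours by (auto simp: F_def sum.distrib[symmetric] intro!: sum.cong)
  finally show ?thesis by simp
qed

lemma sum_load_ge: "n \<le> (\<Sum>i<n. load (int i))"
proof -
  have "n = (\<Sum>i<n. (if full (int i) then 0 else 1 + 1) + (if full (int i) \<and> full (int i - 1) then 1 else 0))"
    using sum_by_blocks[of "\<lambda>_. 1"] by simp
  also have "\<dots> \<le> (\<Sum>i<n. (if full (int i) then 0 else load (int i) + load (int i + 1))
                  + (if full (int i) \<and> full (int i - 1) then load (int i) else 0))"
  proof (rule sum_mono)
    fix i
    show "(if full (int i) then 0 else 1 + 1) + (if full (int i) \<and> full (int i - 1) then 1 else 0)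
        \<le> (if full (int i) then 0 else load (int i) + load (int i + 1))
          + (if full (int i) \<and> full (int i - 1) then load (int i) else 0)"
      using load_pair[of "int i"] load_full[of "int i"] by auto
  qed
  also have "\<dots> = (\<Sum>i<n. load (int i))"
    using load_periodic[of 0] by (intro sum_by_blocks[symmetric]) simp
  finally show ?thesis .
qed

text \<open>Counting: the n half-open edges are disjoint and carry at least n points, so all
  n points of S lie on the boundary of the polygon.\<close>

lemma S_on_boundary: "S \<subseteq> (\<Union>i<n. edge (int i))"
proof (rule ccontr)
  assume "\<not> ?thesis"
  then obtain z where z: "z \<in> S" "z \<notin> (\<Union>i<n. edge (int i))" by auto
  have "disjoint_family_on (\<lambda>i. S \<inter> half_edge (int i)) {..<n}"
  proof (unfold disjoint_family_on_def, intro ballI impI equals0I)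
    fix i j z assume "i \<in> {..<n}" "j \<in> {..<n}" "i \<noteq> j" "z \<in> S \<inter> half_edge (int i) \<inter> (S \<inter> half_edge (int j))"
    then show False using half_open_edges_disjoint[of "int i" "int j" z] by (auto simp: half_edge_def)
  qed
  then have "card (\<Union>i<n. S \<inter> half_edge (int i)) = (\<Sum>i<n. load (int i))"
    using finite_S by (subst card_UN_disjoint) (auto simp: load_def disjoint_family_on_def)
  then have "n \<le> card (\<Union>i<n. S \<inter> half_edge (int i))" using sum_load_ge by simp
  also have "\<dots> \<le> card (S - {z})"
    using z finite_S by (intro card_mono) (auto simp: half_edge_def)
  also have "\<dots> = n - 1" using z finite_S card_S by simp
  finally show False using n_ge_4 by simp
qed

definition sees_wide_angle :: "complex \<Rightarrow> bool" where
  "sees_wide_angle v \<longleftrightarrow>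
     (\<exists>x\<in>S. \<exists>y\<in>S. x \<noteq> v \<and> y \<noteq> v \<and> angle_bound < vec_angle (x - v) (y - v))"

lemma edge_param:
  assumes "x \<in> edge j"
  obtains s where "0 \<le> s" "s \<le> 1" "x = vertex j + of_real s * dir j"
proof -
  obtain s where "0 \<le> s" "s \<le> 1" "x = (1 - s) *\<^sub>R vertex j + s *\<^sub>R vertex (j + 1)"
    using assms by (auto simp: edge_def closed_segment_def)
  then show thesis by (intro that[of s]) (simp_all add: dir_def scaleR_conv_of_real algebra_simps)
qed

lemma point_on_full_edge:
  assumes "full j"
  obtains x where "x \<in> S" "x \<in> edge j" "x \<noteq> p"
proof -
  obtain a b where "a \<noteq> b" "S \<inter> edge j = {a, b}" using assms by (auto simp: full_def card_2_iff)
  then show thesis using that by (cases "a = p") auto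
qed

lemma full_edge_points:
  assumes "full k" "v \<in> S \<inter> edge k" "x \<in> S \<inter> edge k" "v \<noteq> x"
  shows "S \<inter> edge k = {v, x}"
proof -
  have "{v, x} \<subseteq> S \<inter> edge k" "card {v, x} = card (S \<inter> edge k)"
    using assms by (auto simp: full_def)
  then have "{v, x} = S \<inter> edge k" using finite_S by (intro card_subset_eq) auto
  then show ?thesis by simp
qed

lemma not_full_if_vertex_missing:
  assumes "S \<inter> edge_relint j = {}" "vertex j \<notin> S \<or> vertex (j + 1) \<notin> S"
  shows "\<not> full j"
proof -
  have "edge j = edge_relint j \<union> {vertex j, vertex (j + 1)}"
    by (auto simp: edge_def edge_relint_def open_segment_def)
  then obtain w where "S \<inter> edge j \<subseteq> {w}" using assms by blast
  then have "card (S \<inter> edge j) \<le> card {w}" by (intro card_mono) auto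
  then show ?thesis by (simp add: full_def)
qed

text \<open>If the edge before (after) edge k is not full, the edge two steps back (ahead) is full
  and supplies the point y for the wide angle at v; x is a point of S on edge k.\<close>

lemma wide_if_previous_not_full:
  assumes x: "x \<in> S" "x \<noteq> v" and v: "v = vertex k + of_real t * dir k" "0 \<le> t"
    and xv: "x - v = of_real l * dir k" "0 < l" and not_full: "\<not> full (k - 1)"
  shows "sees_wide_angle v"
proof -
  have "full (k - 2)" using not_full_neighbours[OF not_full] by simp
  then obtain y where y: "y \<in> S" "y \<in> edge (k - 2)" "y \<noteq> vertex (k - 2)"
    using point_on_full_edge by blast
  obtain s where s: "0 \<le> s" "s \<le> 1" "y = vertex (k - 2) + of_real s * dir (k - 2)"
    using edge_param[OF y(2)] .
  have "0 < s" using s y(3) by (cases "s = 0") auto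
  have y': "y = vertex (k - 2) + of_real s * (vertex (k - 1) - vertex (k - 2))"
    using s(3) by (simp add: dir_def)
  have "y \<noteq> v \<and> angle_bound < vec_angle (x - v) (y - v)"
    using wide_angle_two_edges_back[OF v(2) xv(2) \<open>0 < s\<close> s(2) v(1) xv(1) y'] by simp
  then show ?thesis using x y by (auto simp: sees_wide_angle_def)
qed

lemma wide_if_next_not_full:
  assumes x: "x \<in> S" "x \<noteq> v" and v: "v = vertex (k + 1) - of_real t * dir k" "0 \<le> t"
    and xv: "x - v = - of_real l * dir k" "0 < l" and not_full: "\<not> full (k + 1)"
  shows "sees_wide_angle v"
proof -
  have "full (k + 2)" using not_full_neighbours[OF not_full] by (simp add: add.commute)
  then obtain y where y: "y \<in> S" "y \<in> edge (k + 2)" "y \<noteq> vertex (k + 3)"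
    using point_on_full_edge by blast
  obtain s where s: "0 \<le> s" "s \<le> 1" "y = vertex (k + 2) + of_real s * dir (k + 2)"
    using edge_param[OF y(2)] .
  have "s < 1" using s y(3) by (cases "s = 1") (auto simp: dir_def add.commute)
  have "k + 2 + 1 = k + 3" by simp
  then have y': "y = vertex (k + 2) + of_real s * (vertex (k + 3) - vertex (k + 2))"
    using s(3) unfolding dir_def by metis
  have "y \<noteq> v \<and> angle_bound < vec_angle (x - v) (y - v)"
    using wide_angle_two_edges_ahead[OF v(2) xv(2) s(1) \<open>s < 1\<close> v(1) xv(1) y'] by simp
  then show ?thesis using x y by (auto simp: sees_wide_angle_def)
qed

text \<open>A point of S at a vertex m: x is taken on a full edge at m; y on the preceding edge
  if that is full, and otherwise two edges further.\<close>

lemma wide_at_full_vertex: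
  assumes v: "v \<in> S" "v = vertex m" and full: "full m"
  shows "sees_wide_angle v"
proof -
  obtain x where x: "x \<in> S" "x \<in> edge m" "x \<noteq> v" using point_on_full_edge[OF full] .
  obtain s where s: "0 \<le> s" "s \<le> 1" "x = vertex m + of_real s * dir m" using edge_param[OF x(2)] .
  have "0 < s" using s x(3) v by (cases "s = 0") auto
  have vx: "v = vertex m + of_real 0 * dir m" "x - v = of_real s * dir m" using v s by simp_all
  show ?thesis
  proof (cases "full (m - 1)")
    case True
    obtain y where y: "y \<in> S" "y \<in> edge (m - 1)" "y \<noteq> vertex m" using point_on_full_edge[OF True] .
    obtain s' where s': "0 \<le> s'" "s' \<le> 1" "y = vertex (m - 1) + of_real s' * dir (m - 1)"
      using edge_param[OF y(2)] .
    have "s' < 1" using s' y(3) by (cases "s' = 1") (auto simp: dir_def)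
    then have "y \<noteq> v \<and> angle_bound < vec_angle (x - v) (y - v)"
      using wide_angle_one_edge_back[OF _ \<open>0 < s\<close> s'(1) _ vx] s' by (auto simp: dir_def)
    then show ?thesis using x y by (auto simp: sees_wide_angle_def)
  next
    case False
    then show ?thesis using wide_if_previous_not_full[OF x(1,3) vx(1) _ vx(2) \<open>0 < s\<close>] by simp
  qed
qed

lemma wide_at_non_full_vertex:
  assumes v: "v \<in> S" "v = vertex m" and not_full: "\<not> full m"
  shows "sees_wide_angle v"
proof -
  have "full (m - 1)" using not_full_neighbours[OF not_full] by auto
  then obtain x where x: "x \<in> S" "x \<in> edge (m - 1)" "x \<noteq> v" using point_on_full_edge by blast
  obtain s where s: "0 \<le> s" "s \<le> 1" "x = vertex (m - 1) + of_real s * dir (m - 1)"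
    using edge_param[OF x(2)] .
  have "s < 1" using s x(3) v by (cases "s = 1") (auto simp: dir_def)
  have vx: "v = vertex (m - 1 + 1) - of_real 0 * dir (m - 1)" "x - v = - of_real (1 - s) * dir (m - 1)"
    using v s by (auto simp: dir_def algebra_simps)
  have "\<not> full (m - 1 + 1)" using not_full by simp
  then show ?thesis using wide_if_next_not_full[OF x(1,3) vx(1) _ vx(2)] \<open>s < 1\<close> by simp
qed

text \<open>A point v of S inside edge k: the other point x of S on edge k lies on one side of v.
  The vertex of edge k on the other side is not in S, and since the relative interiors of
  the neighbouring edges contain no point of S, the neighbouring edge on that side is not
  full.\<close>

lemma wide_inside_edge:
  assumes v: "v \<in> S" "v \<in> edge_relint k"
  shows "sees_wide_angle v"
proof -
  have full: "full k" and empty: "S \<inter> edge_relint (k - 1) = {}" "S \<inter> edge_relint (k + 1) = {}"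
    using adjacent_edges[of k] adjacent_edges[of "k - 1"] v by (auto simp: full_def)
  have vE: "v \<in> edge k" and vW: "v \<noteq> vertex k" "v \<noteq> vertex (k + 1)"
    using v(2) by (auto simp: edge_def edge_relint_def open_segment_def)
  obtain t where t: "0 \<le> t" "t \<le> 1" "v = vertex k + of_real t * dir k" using edge_param[OF vE] .
  have "t \<noteq> 0" "t \<noteq> 1" using t(3) vW by (auto simp: dir_def)
  then have "0 < t" "t < 1" using t(1,2) by auto
  obtain x where x: "x \<in> S" "x \<in> edge k" "x \<noteq> v" using point_on_full_edge[OF full] .
  obtain s where s: "0 \<le> s" "s \<le> 1" "x = vertex k + of_real s * dir k" using edge_param[OF x(2)] .
  have "s \<noteq> t" using s(3) t(3) x(3) by blast
  have two: "S \<inter> edge k = {v, x}" using full_edge_points[OF full] v(1) vE x by auto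
  have first: "vertex k \<in> edge k" and second: "vertex (k + 1) \<in> edge k" by (auto simp: edge_def)
  show ?thesis
  proof (cases "t < s")
    case True
    have "vertex k \<noteq> x" using s(3) True \<open>0 < t\<close> dir_nonzero[of k] by auto
    then have not_full: "\<not> full (k - 1)"
      using two first vW(1) empty(1) by (intro not_full_if_vertex_missing) auto
    have "x - v = of_real (s - t) * dir k" using s(3) t(3) by (simp add: algebra_simps)
    from wide_if_previous_not_full[OF x(1,3) t(3,1) this _ not_full] show ?thesis using True by simp
  next
    case False
    then have "s < t" using \<open>s \<noteq> t\<close> by simp
    have next_vertex: "vertex (k + 1) = vertex k + dir k" by (simp add: dir_def)
    then have "vertex (k + 1) \<noteq> x" using s(3) \<open>s < t\<close> \<open>t < 1\<close> dir_nonzero[of k] by auto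
    then have not_full: "\<not> full (k + 1)"
      using two second vW(2) empty(2) by (intro not_full_if_vertex_missing) auto
    have vx: "v = vertex (k + 1) - of_real (1 - t) * dir k" "x - v = - of_real (t - s) * dir k"
      unfolding next_vertex s(3) t(3) by (simp_all add: algebra_simps)
    from wide_if_next_not_full[OF x(1,3) vx(1) _ vx(2) _ not_full] show ?thesis
      using \<open>s < t\<close> \<open>t < 1\<close> by simp
  qed
qed

theorem every_point_sees_wide_angle:
  assumes "v \<in> S"
  shows "sees_wide_angle v"
proof -
  obtain i where "v \<in> edge (int i)" using S_on_boundary assms by auto
  then consider "v \<in> edge_relint (int i)" | "v = vertex (int i)" | "v = vertex (int i + 1)"
    by (auto simp: edge_def edge_relint_def open_segment_def)
  moreover have "sees_wide_angle v" if "v = vertex m" for m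
    using wide_at_full_vertex[OF assms that] wide_at_non_full_vertex[OF assms that] by blast
  ultimately show ?thesis using wide_inside_edge[OF assms] by blast
qed

end


lemma pre_regular_polygonI:
  assumes S: "finite S" "card S = n" "4 \<le> n" and pre: "pre_regular S"
  shows "\<exists>c \<rho> \<theta>. pre_regular_polygon n c \<rho> \<theta> S"
proof -
  obtain c \<rho> \<theta> where \<rho>: "0 < \<rho>" and adj: "\<forall>k<n.
      (card (S \<inter> reg_edge c \<rho> \<theta> n k) = 2 \<and> S \<inter> reg_edge_relint c \<rho> \<theta> n ((k + 1) mod n) = {}) \<or>
      (card (S \<inter> reg_edge c \<rho> \<theta> n ((k + 1) mod n)) = 2 \<and> S \<inter> reg_edge_relint c \<rho> \<theta> n k = {})"
    using pre S(2) unfolding pre_regular_def Let_def by blast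
  interpret P: regular_polygon n c \<rho> \<theta> using S(3) \<rho> by unfold_locales
  have vertex: "reg_vertex c \<rho> \<theta> n k = P.vertex (int k)" for k
    by (simp add: reg_vertex_def P.vertex_def)
  have vertex_succ: "P.vertex (int ((k + 1) mod n)) = P.vertex (int k + 1)" for k
    using P.vertex_mod[of "int k + 1"] by (simp add: zmod_int add.commute)
  have edge: "reg_edge c \<rho> \<theta> n k = P.edge (int k)" for k
    unfolding reg_edge_def P.edge_def vertex vertex_succ ..
  have relint: "reg_edge_relint c \<rho> \<theta> n k = P.edge_relint (int k)" for k
    unfolding reg_edge_relint_def P.edge_relint_def vertex vertex_succ ..
  have adjacent: "(card (S \<inter> P.edge j) = 2 \<and> S \<inter> P.edge_relint (j + 1) = {})
      \<or> (card (S \<inter> P.edge (j + 1)) = 2 \<and> S \<inter> P.edge_relint j = {})" for j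
  proof -
    define k where "k = nat (j mod int n)"
    have k: "k < n" "int k = j mod int n" using S(3) by (auto simp: k_def nat_less_iff)
    have "int ((k + 1) mod n) = (j + 1) mod int n" by (simp add: k zmod_int mod_add_right_eq add.commute)
    then have next_edge: "P.edge (int ((k + 1) mod n)) = P.edge (j + 1)"
      "P.edge_relint (int ((k + 1) mod n)) = P.edge_relint (j + 1)"
      by (simp_all add: P.edge_mod P.edge_relint_mod)
    have same: "P.edge (int k) = P.edge j" "P.edge_relint (int k) = P.edge_relint j"
      by (simp_all add: k P.edge_mod P.edge_relint_mod)
    have "(card (S \<inter> P.edge (int k)) = 2 \<and> S \<inter> P.edge_relint (int ((k + 1) mod n)) = {})
        \<or> (card (S \<inter> P.edge (int ((k + 1) mod n))) = 2 \<and> S \<inter> P.edge_relint (int k) = {})"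
      using adj[rule_format, OF k(1)] unfolding edge relint .
    then show ?thesis unfolding next_edge same .
  qed
  have "pre_regular_polygon n c \<rho> \<theta> S"
    using S adjacent by unfold_locales auto
  then show ?thesis by blast
qed

theorem lemma5p10:
  fixes S :: "complex set" and n :: nat
  assumes "finite S" and "card S = n" and "n > 4"
    and "\<And>c r. is_SED S c r \<Longrightarrow> c \<notin> S"
    and "pre_regular S"
  shows "\<forall>v alpha. hull_internal_angle S v alpha \<longrightarrow> alpha > pi * (real n - 3) / real n"
proof (intro allI impI)
  fix v alpha
  assume angle: "hull_internal_angle S v alpha"
  obtain c \<rho> \<theta> where "pre_regular_polygon n c \<rho> \<theta> S"
    using pre_regular_polygonI assms(1,2,3,5) by fastforce
  then interpret P: pre_regular_polygon n c \<rho> \<theta> S .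
  have "v \<in> S" using hull_internal_angle_vertex_in[OF angle] .
  then obtain x y where "x \<in> S" "y \<in> S" "x \<noteq> v" "y \<noteq> v"
    "P.angle_bound < vec_angle (x - v) (y - v)"
    using P.every_point_sees_wide_angle[OF \<open>v \<in> S\<close>] unfolding P.sees_wide_angle_def by blast
  moreover have "vec_angle (x - v) (y - v) \<le> alpha"
    using hull_internal_angle_ge[OF assms(1) angle] calculation by blast
  ultimately show "alpha > pi * (real n - 3) / real n" by (simp add: P.angle_bound_def)
qed

end
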